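(* Let $N=2^n$ with $n\ge 2$, let $\mathbf{s}$ be a Zadoff–Chu sequence of length $N$, and let $\pi(x)=a_mx^m+\dots+a_1x+a_0\in\mathbb{Z}_N[x]$ be a permutation polynomial over $\mathbb{Z}_N$ (equivalently, $a_1$ is odd, $a_2+a_4+a_6+\cdots$ is even and $a_3+a_5+a_7+\cdots$ is even). Then (i) $\mathbf{s}\circ\pi$ is a CAZAC sequence, and (ii) $\mathbf{s}\circ\pi^{-1}$ is a CAZAC sequence.
   Context: $\xi_N=e^{-2\pi\sqrt{-1}/N}$, and $\xi_N^{x/2}$ means $e^{-\pi\sqrt{-1}x/N}$. A Zadoff–Chu sequence of length $N$ is $\mathbf{s}$ with $s(k)=\xi_N^{u(k^2+(N\bmod 2)k+2lk)/2}$, $0\le k<N$, where $\gcd(u,N)=1$ and $l$ is an integer. A permutation polynomial over $\mathbb{Z}_N$ is a polynomial inducing a bijection $k\mapsto\pi(k)\bmod N$ of $\mathbb{Z}_N$; $\pi^{-1}$ is the inverse permutation. $(\mathbf{s}\circ\sigma)(k)=s(\sigma(k))$. A sequence is CAZAC if all entries have modulus 1 and its periodic auto-correlation $\theta(d)=\sum_{k=0}^{N-1}y(k)y^*(k+d)$ (indices mod $N$) vanishes for all $0<d<N$. *)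

theory Defs
  imports Complex_Main "HOL-Computational_Algebra.Polynomial"
begin

text \<open>Sequences of length N are functions int => complex, used on indices 0..N-1.\<close>

text \<open>Zadoff-Chu sequence: s(k) = xi_N^(u(k^2 + (N mod 2) k + 2 l k)/2) with
  xi_N = exp(-2 pi i / N), i.e. s(k) = exp(- pi i u (k^2 + (N mod 2) k + 2 l k) / N).\<close>
definition zc_seq :: "int \<Rightarrow> int \<Rightarrow> int \<Rightarrow> int \<Rightarrow> complex" where
  "zc_seq N u l k =
     exp (- (pi * \<i> * of_int (u * (k^2 + (N mod 2) * k + 2 * l * k)) / of_int N))"

definition is_zadoff_chu :: "int \<Rightarrow> (int \<Rightarrow> complex) \<Rightarrow> bool" where
  "is_zadoff_chu N s \<longleftrightarrow> (\<exists>u l. gcd u N = 1 \<and> (\<forall>k\<in>{0..<N}. s k = zc_seq N u l k))"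

definition perm_poly :: "int \<Rightarrow> int poly \<Rightarrow> bool" where
  "perm_poly N p \<longleftrightarrow> bij_betw (\<lambda>k. poly p k mod N) {0..<N} {0..<N}"

definition perm_of_poly :: "int \<Rightarrow> int poly \<Rightarrow> int \<Rightarrow> int" where
  "perm_of_poly N p k = poly p k mod N"

definition inv_perm_of_poly :: "int \<Rightarrow> int poly \<Rightarrow> int \<Rightarrow> int" where
  "inv_perm_of_poly N p = inv_into {0..<N} (perm_of_poly N p)"

definition autocorr :: "int \<Rightarrow> (int \<Rightarrow> complex) \<Rightarrow> int \<Rightarrow> complex" where
  "autocorr N y d = (\<Sum>k\<in>{0..<N}. y k * cnj (y ((k + d) mod N)))"

definition is_CAZAC :: "int \<Rightarrow> (int \<Rightarrow> complex) \<Rightarrow> bool" where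
  "is_CAZAC N y \<longleftrightarrow> (\<forall>k\<in>{0..<N}. cmod (y k) = 1) \<and> (\<forall>d. 0 < d \<and> d < N \<longrightarrow> autocorr N y d = 0)"

end

theory Submission
  imports Defs "HOL-Computational_Algebra.Factorial_Ring" "HOL-Combinatorics.Cycles"
begin

(* Write y = s o pi. As N is even, the Zadoff-Chu phase of an index a is, up to a constant factor,
   zeta^(-u (a + l)^2) with zeta = exp(pi i / N) a primitive 2N-th root of unity, and this depends
   on a only modulo N. Hence, with Q = pi + l, y(k) conj(y(k + d)) = zeta^(u (Q(k + d)^2 - Q(k)^2)).

   A permutation polynomial modulo 2^n (n >= 2) has odd derivative values and odd unit differences,
   so Q(x + 2^v q) - Q(x) is 2^v times an odd number whenever q is odd. Writing 0 < d < N as 2^v q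
   and taking t = 2^(n - 1 - v), the second difference of Q with steps d and t vanishes modulo N,
   while the product of the two first differences is N/2 times an odd number; therefore the second
   difference of Q^2 is N modulo 2N. Shifting k by t thus negates every term of the autocorrelation
   sum, which must vanish.

   For (ii): the inverse of a permutation of a finite set is one of its powers, and the powers of
   k -> pi(k) mod N are induced by the iterated compositions of pi, which are again permutation
   polynomials. *)

section \<open>Differences of integer polynomials\<close>

lemma poly_diff_dvd:
  fixes P :: "'a::comm_ring_1 poly"
  shows "(x - y) dvd (poly P x - poly P y)"
proof (induct P)
  case (pCons c R)
  have "poly (pCons c R) x - poly (pCons c R) y = (x - y) * poly R x + y * (poly R x - poly R y)"
    by (simp add: algebra_simps)
  with pCons show ?case
    by (simp add: dvd_add)
qed simp

lemma poly_mod_cong: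
  fixes P :: "int poly"
  assumes "x mod m = y mod m"
  shows "poly P x mod m = poly P y mod m"
  using assms by (meson dvd_trans mod_eq_dvd_iff poly_diff_dvd)

lemma poly_diff_pderiv_dvd:
  fixes P :: "'a::idom poly"
  shows "a\<^sup>2 dvd poly P (x + a) - poly P x - a * poly (pderiv P) x"
proof (induct P arbitrary: x)
  case (pCons c R)
  have "poly (pCons c R) (x + a) - poly (pCons c R) x - a * poly (pderiv (pCons c R)) x
      = x * (poly R (x + a) - poly R x - a * poly (pderiv R) x) + a * (poly R (x + a) - poly R x)"
    by (simp add: pderiv_pCons algebra_simps)
  moreover have "a\<^sup>2 dvd a * (poly R (x + a) - poly R x)"
    using poly_diff_dvd[of "x + a" x R] by (simp add: power2_eq_square)
  ultimately show ?case
    using pCons(2) by (simp add: dvd_add)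
qed simp

lemma poly_diff_pderivE:
  fixes P :: "'a::idom poly"
  obtains k where "poly P (x + a) - poly P x = a * poly (pderiv P) x + a\<^sup>2 * k"
  using poly_diff_pderiv_dvd[of a P x] by (metis dvdE diff_eq_eq add.commute)

definition second_diff :: "'a::comm_ring poly \<Rightarrow> 'a \<Rightarrow> 'a \<Rightarrow> 'a \<Rightarrow> 'a" where
  "second_diff P a b x = poly P (x + a + b) - poly P (x + a) - poly P (x + b) + poly P x"

lemma second_diff_even_dvd:
  fixes P :: "int poly"
  assumes "even a" "even b"
  shows "2 * a * b dvd second_diff P a b x"
proof (induct P arbitrary: x)
  case 0
  then show ?case by (simp add: second_diff_def)
next
  case (pCons c R)
  let ?R = "poly R" and ?R' = "poly (pderiv R)"
  have split: "second_diff (pCons c R) a b x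
      = x * second_diff R a b x + a * (?R (x + a + b) - ?R (x + a)) + b * (?R (x + a + b) - ?R (x + b))"
    by (simp add: second_diff_def algebra_simps)
  obtain k1 where k1: "?R (x + a + b) - ?R (x + a) = b * ?R' (x + a) + b\<^sup>2 * k1"
    using poly_diff_pderivE[of R "x + a" b] by (metis add.assoc)
  obtain k2 where k2: "?R (x + a + b) - ?R (x + b) = a * ?R' (x + b) + a\<^sup>2 * k2"
    using poly_diff_pderivE[of R "x + b" a] by (metis add.assoc add.commute)
  obtain j where j: "?R' (x + a) = ?R' (x + b) + (a - b) * j"
    using poly_diff_dvd[of "x + a" "x + b" "pderiv R"] by (auto elim!: dvdE simp: algebra_simps)
  obtain a' b' where ab: "a = 2 * a'" "b = 2 * b'"
    using assms by (auto elim!: evenE)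
  \<comment> \<open>the two first-order terms combine to \<open>a b (R'(x+a) + R'(x+b))\<close>, and \<open>a - b\<close> is even\<close>
  have "a * (?R (x + a + b) - ?R (x + a)) + b * (?R (x + a + b) - ?R (x + b))
      = 2 * a * b * (?R' (x + b) + (a' - b') * j + a' * k2 + b' * k1)"
    unfolding k1 k2 j unfolding ab by (simp add: algebra_simps power2_eq_square)
  then show ?case
    unfolding split add.assoc using pCons(2)[of x] by (simp add: dvd_add)
qed

section \<open>Permutation polynomials modulo powers of two\<close>

lemma perm_poly_pderiv_odd:
  assumes "n \<ge> 2" "N = 2 ^ n" "perm_poly N p"
  shows "odd (poly (pderiv p) z)"
proof
  assume even_z: "even (poly (pderiv p) z)"
  define M :: int where "M = 2 ^ (n - 1)"
  have N: "N = 2 * M"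
    using assms(1,2) by (simp add: M_def flip: power_Suc)
  have "even M" "M > 0"
    using assms(1) by (simp_all add: M_def)
  define x where "x = z mod M"
  have "M dvd z - x"
    by (simp add: x_def minus_mod_eq_mult_div)
  then have "2 dvd poly (pderiv p) z - poly (pderiv p) x"
    using \<open>even M\<close> poly_diff_dvd[of z x "pderiv p"] by (meson dvd_trans)
  then have "even (poly (pderiv p) z - (poly (pderiv p) z - poly (pderiv p) x))"
    by (rule dvd_diff[OF even_z])
  then have "even (poly (pderiv p) x)"
    by simp
  then obtain r where r: "poly (pderiv p) x = 2 * r" ..
  obtain k where k: "poly p (x + M) - poly p x = M * poly (pderiv p) x + M\<^sup>2 * k"
    using poly_diff_pderivE .
  obtain m where m: "M = 2 * m"
    using \<open>even M\<close> ..
  \<comment> \<open>so \<open>p\<close> would identify \<open>x\<close> and \<open>x + N/2\<close> modulo \<open>N\<close>\<close>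
  have "poly p (x + M) - poly p x = N * (r + m * k)"
    unfolding k r N by (simp add: m algebra_simps power2_eq_square)
  then have "poly p (x + M) mod N = poly p x mod N"
    by (simp add: mod_eq_dvd_iff)
  moreover have "inj_on (\<lambda>k. poly p k mod N) {0..<N}"
    using assms(3) by (simp add: perm_poly_def bij_betw_def)
  moreover have "0 \<le> x" "x < M"
    using \<open>M > 0\<close> by (simp_all add: x_def)
  then have "x \<in> {0..<N}" "x + M \<in> {0..<N}"
    by (simp_all add: N)
  ultimately show False
    using \<open>M > 0\<close> inj_onD[of _ _ "x + M" x] by fastforce
qed

lemma perm_poly_step_odd:
  assumes "even N" "0 < N" "perm_poly N p"
  shows "odd (poly p (z + 1) - poly p z)"
proof -
  have parity: "poly p k mod 2 = poly p (k mod 2) mod 2" for k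
    by (rule poly_mod_cong) simp
  have "poly p 0 mod 2 \<noteq> poly p 1 mod 2"
  proof
    assume same: "poly p 0 mod 2 = poly p 1 mod 2"
    have const: "poly p k mod 2 = poly p 0 mod 2" for k
      using parity[of k] same by (cases "even k") (simp_all add: mod2_eq_if)
    have "(\<lambda>k. poly p k mod N) ` {0..<N} = {0..<N}"
      using assms(3) by (simp add: perm_poly_def bij_betw_def)
    moreover have "0 \<in> {0..<N}" "1 \<in> {0..<N}"
      using assms(1,2) by auto
    ultimately have "0 \<in> (\<lambda>k. poly p k mod N) ` {0..<N}" "1 \<in> (\<lambda>k. poly p k mod N) ` {0..<N}"
      by simp_all
    then obtain k0 k1 where "0 = poly p k0 mod N" "1 = poly p k1 mod N"
      by blast
    then have "poly p k0 mod 2 = 0" "poly p k1 mod 2 = 1"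
      using mod_mod_cancel[OF \<open>even N\<close>, of "poly p k0"] mod_mod_cancel[OF \<open>even N\<close>, of "poly p k1"]
      by simp_all
    with const[of k0] const[of k1] show False
      by simp
  qed
  then have "poly p (z + 1) mod 2 \<noteq> poly p z mod 2"
    using parity[of z] parity[of "z + 1"] by (cases "even z") (simp_all add: mod2_eq_if)
  then show ?thesis
    by (simp add: mod_eq_dvd_iff[symmetric] odd_iff_mod_2_eq_one)
qed

lemma poly_diff_pow2_times_odd:
  fixes P :: "int poly"
  assumes pderiv_odd: "\<And>z. odd (poly (pderiv P) z)"
    and step_odd: "\<And>z. odd (poly P (z + 1) - poly P z)"
    and "odd q"
  obtains r where "odd r" "poly P (x + 2 ^ v * q) - poly P x = 2 ^ v * r"
proof (cases "v = 0")
  case True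
  have "(x + q) - (x + 1) dvd poly P (x + q) - poly P (x + 1)"
    by (rule poly_diff_dvd)
  moreover have "even ((x + q) - (x + 1))"
    using \<open>odd q\<close> by simp
  ultimately have "even (poly P (x + q) - poly P (x + 1))"
    by (rule dvd_trans[rotated])
  moreover have "odd (poly P (x + 1) - poly P x)"
    by (rule step_odd)
  ultimately have "odd (poly P (x + q) - poly P x)"
    by (metis diff_add_cancel even_add add.commute)
  with True show ?thesis
    using that[of "poly P (x + q) - poly P x"] by simp
next
  case False
  obtain k where k: "poly P (x + 2 ^ v * q) - poly P x = 2 ^ v * q * poly (pderiv P) x + (2 ^ v * q)\<^sup>2 * k"
    using poly_diff_pderivE .
  then have "poly P (x + 2 ^ v * q) - poly P x = 2 ^ v * (q * poly (pderiv P) x + 2 ^ v * q\<^sup>2 * k)"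
    by (simp add: algebra_simps power2_eq_square)
  moreover have "odd (q * poly (pderiv P) x + 2 ^ v * q\<^sup>2 * k)"
    using pderiv_odd \<open>odd q\<close> False by simp
  ultimately show ?thesis
    using that by blast
qed

lemma pow2_mult_odd_diff_dvd:
  fixes r s :: int
  assumes "odd r" "odd s"
  shows "2 ^ Suc k dvd 2 ^ k * r - 2 ^ k * s"
proof -
  have "even (r - s)"
    using assms by simp
  then obtain j where "r - s = 2 * j" ..
  then have "2 ^ k * r - 2 ^ k * s = 2 ^ Suc k * j"
    by (simp add: right_diff_distrib[symmetric])
  then show ?thesis
    by simp
qed

lemma second_diff_pow2_dvd:
  fixes P :: "int poly"
  assumes "\<And>z. odd (poly (pderiv P) z)" "\<And>z. odd (poly P (z + 1) - poly P z)" "odd q"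
  shows "2 ^ Suc (v + w) dvd second_diff P (2 ^ v * q) (2 ^ w) x"
proof -
  note diff = poly_diff_pow2_times_odd[OF assms(1,2)]
  consider "v = 0" | "w = 0" | "v \<noteq> 0" "w \<noteq> 0"
    by blast
  then show ?thesis
  proof cases
    case 1
    obtain r s where "odd r" "poly P (x + q + 2 ^ w) - poly P (x + q) = 2 ^ w * r"
      and "odd s" "poly P (x + 2 ^ w) - poly P x = 2 ^ w * s"
      using diff[of 1 "x + q" w] diff[of 1 x w] by (metis mult.right_neutral odd_one)
    then show ?thesis
      using 1 pow2_mult_odd_diff_dvd[of r s w] by (simp add: second_diff_def algebra_simps)
  next
    case 2
    obtain r s where "odd r" "poly P (x + 1 + 2 ^ v * q) - poly P (x + 1) = 2 ^ v * r"
      and "odd s" "poly P (x + 2 ^ v * q) - poly P x = 2 ^ v * s"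
      using diff[OF \<open>odd q\<close>, of "x + 1" v] diff[OF \<open>odd q\<close>, of x v] by metis
    then show ?thesis
      using 2 pow2_mult_odd_diff_dvd[of r s v] by (simp add: second_diff_def algebra_simps)
  next
    case 3
    then have "2 * (2 ^ v * q) * 2 ^ w dvd second_diff P (2 ^ v * q) (2 ^ w) x"
      by (intro second_diff_even_dvd) simp_all
    then show ?thesis
      by (rule dvd_trans[rotated]) (simp add: power_add)
  qed
qed

lemma square_second_diff_dvd:
  fixes A B C D M r :: int
  assumes "2 * M dvd D - C - B + A" "(B - A) * (C - A) = M * r" "odd r"
  shows "4 * M dvd D\<^sup>2 - C\<^sup>2 - B\<^sup>2 + A\<^sup>2 - 2 * M"
proof -
  obtain e where e: "D = B + C - A + 2 * M * e"
    using assms(1) by (metis dvdE diff_add_cancel add.commute diff_diff_eq2 add_diff_eq)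
  obtain j where j: "r = 2 * j + 1"
    using assms(3) by (metis oddE)
  \<comment> \<open>\<open>(B + C - A)\<^sup>2 - C\<^sup>2 - B\<^sup>2 + A\<^sup>2 = 2 (B - A) (C - A)\<close>\<close>
  have "D\<^sup>2 - C\<^sup>2 - B\<^sup>2 + A\<^sup>2 - 2 * M = 2 * (B - A) * (C - A) - 2 * M + 4 * M * (e * (B + C - A) + M * e\<^sup>2)"
    unfolding e by (simp add: algebra_simps power2_eq_square)
  also have "\<dots> = 4 * M * (j + e * (B + C - A) + M * e\<^sup>2)"
    using assms(2) unfolding j by (simp add: algebra_simps)
  finally show ?thesis
    by simp
qed

lemma second_diff_square_mod:
  fixes Q :: "int poly"
  assumes pderiv_odd: "\<And>z. odd (poly (pderiv Q) z)"
    and step_odd: "\<And>z. odd (poly Q (z + 1) - poly Q z)"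
    and N: "N = 2 ^ n" and d: "0 < d" "d < N"
  obtains t where "\<And>x. 2 * N dvd second_diff (Q\<^sup>2) d t x - N"
proof -
  define v where "v = multiplicity 2 d"
  obtain q where dq: "d = 2 ^ v * q" and "odd q"
    using multiplicity_decompose'[of d 2] d(1) unfolding v_def by auto
  have "2 ^ v \<le> d"
    using d(1) unfolding dq by (simp add: zero_less_mult_iff)
  with d(2) have "(2::int) ^ v < 2 ^ n"
    unfolding N by linarith
  then have "v < n"
    by simp
  define w where "w = n - Suc v"
  define M :: int where "M = 2 ^ (v + w)"
  have NM: "N = 2 * M"
    using \<open>v < n\<close> unfolding N M_def w_def by (simp flip: power_Suc)
  \<comment> \<open>\<open>v + w = n - 1\<close>, so the first differences in steps \<open>d\<close> and \<open>2 ^ w\<close> multiply to \<open>N/2\<close> times an odd number\<close>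
  show ?thesis
  proof (rule that[of "2 ^ w"])
    fix x
    let ?A = "poly Q x" and ?B = "poly Q (x + d)" and ?C = "poly Q (x + 2 ^ w)"
      and ?D = "poly Q (x + d + 2 ^ w)"
    have "2 * M dvd second_diff Q d (2 ^ w) x"
      using second_diff_pow2_dvd[OF pderiv_odd step_odd \<open>odd q\<close>] by (simp add: dq M_def)
    then have "2 * M dvd ?D - ?C - ?B + ?A"
      by (simp add: second_diff_def algebra_simps)
    moreover obtain r s where "odd r" "?B - ?A = 2 ^ v * r" "odd s" "?C - ?A = 2 ^ w * s"
      using poly_diff_pow2_times_odd[OF pderiv_odd step_odd \<open>odd q\<close>, of x v]
        poly_diff_pow2_times_odd[OF pderiv_odd step_odd odd_one, of x w]
      by (metis dq mult.right_neutral)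
    then have "(?B - ?A) * (?C - ?A) = M * (r * s)" "odd (r * s)"
      by (simp_all add: M_def power_add)
    ultimately have "4 * M dvd ?D\<^sup>2 - ?C\<^sup>2 - ?B\<^sup>2 + ?A\<^sup>2 - 2 * M"
      by (rule square_second_diff_dvd)
    then show "2 * N dvd second_diff (Q\<^sup>2) d (2 ^ w) x - N"
      by (simp add: NM second_diff_def poly_power algebra_simps)
  qed
qed

section \<open>Zadoff-Chu phases and the autocorrelation\<close>

definition zeta :: "int \<Rightarrow> int \<Rightarrow> complex" where
  "zeta N X = cis (pi * of_int X / of_int N)"

lemma zeta_add: "zeta N (X + Y) = zeta N X * zeta N Y"
  by (simp add: zeta_def cis_mult add_divide_distrib distrib_left)

lemma cnj_zeta: "cnj (zeta N X) = zeta N (- X)"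
  by (simp add: zeta_def cis_cnj)

lemma norm_zeta [simp]: "cmod (zeta N X) = 1"
  by (simp add: zeta_def)

lemma zeta_eqI:
  assumes "N \<noteq> 0" "2 * N dvd X - Y"
  shows "zeta N X = zeta N Y"
proof -
  obtain j where "X = Y + 2 * N * j"
    using assms(2) by (metis dvdE diff_add_cancel add.commute)
  then have "zeta N X = zeta N Y * cis (2 * pi * of_int j)"
    using assms(1) by (simp add: zeta_def cis_mult field_simps)
  then show ?thesis
    by (simp add: cis_multiple_2pi)
qed

lemma zeta_add_self:
  assumes "N \<noteq> 0"
  shows "zeta N (X + N) = - zeta N X"
proof -
  have "zeta N N = -1"
    using assms by (simp add: zeta_def)
  then show ?thesis
    by (simp add: zeta_add)
qed

lemma zeta_second_diff_square:
  fixes Q :: "int poly"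
  assumes "odd u" "N \<noteq> 0" "2 * N dvd second_diff (Q\<^sup>2) d t k - N"
  shows "zeta N (u * ((poly Q (k + t + d))\<^sup>2 - (poly Q (k + t))\<^sup>2))
    = - zeta N (u * ((poly Q (k + d))\<^sup>2 - (poly Q k)\<^sup>2))"
proof -
  obtain j where "u = 2 * j + 1"
    using \<open>odd u\<close> by (rule oddE)
  then have "u * ((poly Q (k + t + d))\<^sup>2 - (poly Q (k + t))\<^sup>2) - (u * ((poly Q (k + d))\<^sup>2 - (poly Q k)\<^sup>2) + N)
      = u * (second_diff (Q\<^sup>2) d t k - N) + 2 * N * j"
    by (simp add: second_diff_def poly_power algebra_simps)
  then have "2 * N dvd u * ((poly Q (k + t + d))\<^sup>2 - (poly Q (k + t))\<^sup>2) - (u * ((poly Q (k + d))\<^sup>2 - (poly Q k)\<^sup>2) + N)"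
    using assms(3) by simp
  then show ?thesis
    using assms(2) by (simp add: zeta_eqI zeta_add_self)
qed

lemma square_cong_dvd:
  fixes x y N :: int
  assumes "N dvd x - y" "even N"
  shows "2 * N dvd x\<^sup>2 - y\<^sup>2"
proof -
  obtain j where j: "x = y + N * j"
    using assms(1) by (metis dvdE diff_add_cancel add.commute)
  obtain h where h: "N = 2 * h"
    using assms(2) ..
  have "x\<^sup>2 - y\<^sup>2 = 2 * N * (y * j + h * j\<^sup>2)"
    unfolding j by (simp add: h algebra_simps power2_eq_square)
  then show ?thesis
    by simp
qed

lemma zc_seq_eq_zeta:
  assumes "even N"
  shows "zc_seq N u l k = zeta N (u * l\<^sup>2) * zeta N (- u * (k + l)\<^sup>2)"
proof -
  have "zc_seq N u l k = zeta N (u * l\<^sup>2 + (- u * (k + l)\<^sup>2))"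
    using assms by (simp add: zc_seq_def zeta_def cis_conv_exp algebra_simps power2_eq_square minus_divide_left)
  then show ?thesis
    by (simp only: zeta_add)
qed

lemma autocorr_eq_0_if_shift_negates:
  fixes y :: "int \<Rightarrow> complex"
  assumes "0 < N"
    and periodic: "\<And>k. y (k mod N) = y k"
    and negates: "\<And>k. y (k + t) * cnj (y (k + t + d)) = - (y k * cnj (y (k + d)))"
  shows "autocorr N y d = 0"
proof -
  define T where "T k = y k * cnj (y (k + d))" for k
  have T_mod: "T (k mod N) = T k" for k
    unfolding T_def by (metis periodic mod_add_left_eq)
  have autocorr: "autocorr N y d = sum T {0..<N}"
    unfolding autocorr_def T_def by (simp add: periodic)
  have "sum T {0..<N} = (\<Sum>k\<in>{0..<N}. T ((k + t) mod N))"
    by (rule sum.reindex_bij_witness[where i = "\<lambda>k. (k + t) mod N" and j = "\<lambda>k. (k - t) mod N"])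
      (use \<open>0 < N\<close> in \<open>auto simp: mod_simps T_mod\<close>)
  also have "\<dots> = (\<Sum>k\<in>{0..<N}. - T k)"
  proof (rule sum.cong)
    fix k
    have "T ((k + t) mod N) = T (k + t)"
      by (rule T_mod)
    also have "\<dots> = - T k"
      unfolding T_def by (simp add: negates add.assoc[symmetric])
    finally show "T ((k + t) mod N) = - T k" .
  qed simp
  also have "\<dots> = - sum T {0..<N}"
    by (simp add: sum_negf)
  finally show ?thesis
    using autocorr by simp
qed

lemma zadoff_chu_comp_perm_of_poly:
  assumes "even N" "0 < N" "\<forall>k\<in>{0..<N}. s k = zc_seq N u l k"
  shows "(s \<circ> perm_of_poly N p) k = zeta N (u * l\<^sup>2) * zeta N (- u * (poly p k + l)\<^sup>2)"
proof -
  let ?a = "perm_of_poly N p k"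
  have "?a \<in> {0..<N}"
    using assms(2) by (simp add: perm_of_poly_def)
  then have "(s \<circ> perm_of_poly N p) k = zeta N (u * l\<^sup>2) * zeta N (- u * (?a + l)\<^sup>2)"
    using assms(3) zc_seq_eq_zeta[OF assms(1)] by simp
  also have "zeta N (- u * (?a + l)\<^sup>2) = zeta N (- u * (poly p k + l)\<^sup>2)"
  proof (rule zeta_eqI)
    have "N dvd (?a + l) - (poly p k + l)"
      by (simp add: perm_of_poly_def mod_eq_dvd_iff[symmetric])
    then have "2 * N dvd (?a + l)\<^sup>2 - (poly p k + l)\<^sup>2"
      using assms(1) by (rule square_cong_dvd)
    then show "2 * N dvd - u * (?a + l)\<^sup>2 - - u * (poly p k + l)\<^sup>2"
      by (metis dvd_mult minus_mult_left right_diff_distrib)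
  qed (use assms(2) in simp)
  finally show ?thesis .
qed

lemma zadoff_chu_comp_perm_of_poly_correlation:
  fixes p :: "int poly"
  assumes "even N" "0 < N" "\<forall>k\<in>{0..<N}. s k = zc_seq N u l k"
  defines "y \<equiv> s \<circ> perm_of_poly N p"
  shows "y k * cnj (y j) = zeta N (u * ((poly p j + l)\<^sup>2 - (poly p k + l)\<^sup>2))"
proof -
  have "y k * cnj (y j)
      = zeta N (u * l\<^sup>2 + - u * (poly p k + l)\<^sup>2 + - (u * l\<^sup>2 + - u * (poly p j + l)\<^sup>2))"
    unfolding y_def zadoff_chu_comp_perm_of_poly[OF assms(1-3)]
    by (simp only: complex_cnj_mult cnj_zeta zeta_add[symmetric])
  also have "\<dots> = zeta N (u * ((poly p j + l)\<^sup>2 - (poly p k + l)\<^sup>2))"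
    by (rule arg_cong[where f = "zeta N"]) (simp add: algebra_simps)
  finally show ?thesis .
qed

lemma is_CAZAC_zadoff_chu_comp_perm_of_poly:
  assumes "n \<ge> 2" "N = 2 ^ n" "is_zadoff_chu N s" "perm_poly N p"
  shows "is_CAZAC N (s \<circ> perm_of_poly N p)"
proof -
  obtain u l where "gcd u N = 1" and s: "\<forall>k\<in>{0..<N}. s k = zc_seq N u l k"
    using assms(3) unfolding is_zadoff_chu_def by (elim exE conjE) (rule that)
  have "0 < N" "even N"
    using assms(1,2) by simp_all
  have "odd u"
    using \<open>gcd u N = 1\<close> \<open>even N\<close> by (metis gcd_greatest odd_one is_unit_gcd)
  define y where "y = s \<circ> perm_of_poly N p"
  define Q where "Q = p + [:l:]"
  have corr: "y k * cnj (y j) = zeta N (u * ((poly Q j)\<^sup>2 - (poly Q k)\<^sup>2))" for k j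
    unfolding y_def Q_def using zadoff_chu_comp_perm_of_poly_correlation[OF \<open>even N\<close> \<open>0 < N\<close> s] by simp
  have "odd (poly (pderiv Q) z)" "odd (poly Q (z + 1) - poly Q z)" for z
    using perm_poly_pderiv_odd[OF assms(1,2,4)] perm_poly_step_odd[OF \<open>even N\<close> \<open>0 < N\<close> assms(4)]
    by (simp_all add: Q_def pderiv_add)
  note second_diff = second_diff_square_mod[of Q, OF this assms(2)]
  have "is_CAZAC N y"
    unfolding is_CAZAC_def
  proof (intro conjI ballI allI impI)
    fix k
    show "cmod (y k) = 1"
      unfolding y_def zadoff_chu_comp_perm_of_poly[OF \<open>even N\<close> \<open>0 < N\<close> s] by (simp add: norm_mult)
  next
    fix d
    assume "0 < d \<and> d < N"
    then obtain t where t: "\<And>x. 2 * N dvd second_diff (Q\<^sup>2) d t x - N"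
      using second_diff by blast
    show "autocorr N y d = 0"
    proof (rule autocorr_eq_0_if_shift_negates[OF \<open>0 < N\<close>])
      show "y (k mod N) = y k" for k
        using poly_mod_cong[of "k mod N" N k p] by (simp add: y_def perm_of_poly_def)
      show "y (k + t) * cnj (y (k + t + d)) = - (y k * cnj (y (k + d)))" for k
        using zeta_second_diff_square[OF \<open>odd u\<close> _ t[of k]] \<open>0 < N\<close> by (simp add: corr)
    qed
  qed
  then show ?thesis
    by (simp add: y_def)
qed

section \<open>Inverses of permutation polynomials\<close>

lemma inv_into_eq_funpow_restrict_id:
  assumes "bij_betw f A A" "finite A"
  obtains m where "\<And>k. k \<in> A \<Longrightarrow> inv_into A f k = (restrict_id f A ^^ m) k"
proof -
  let ?g = "restrict_id f A"
  have "?g permutes A"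
    using assms(1) by (rule permutes_restrict_id)
  then obtain n where n: "?g ^^ n = id" "n > 0"
    using permutation_is_nilpotent permutes_imp_permutation[OF assms(2)] by blast
  then obtain m where n_m: "n = Suc m"
    using gr0_implies_Suc by blast
  show ?thesis
  proof (rule that[of m])
    fix k
    assume "k \<in> A"
    have gk: "(?g ^^ m) k \<in> A"
      using permutes_in_image[OF permutes_funpow[OF \<open>?g permutes A\<close>]] \<open>k \<in> A\<close> by blast
    have "f ((?g ^^ m) k) = (?g ^^ n) k"
      using gk by (simp add: n_m)
    also have "\<dots> = k"
      using n(1) by simp
    finally have "inv_into A f k = inv_into A f (f ((?g ^^ m) k))"
      by simp
    also have "\<dots> = (?g ^^ m) k"
      using assms(1) gk by (simp add: bij_betw_def inv_into_f_f)
    finally show "inv_into A f k = (?g ^^ m) k" .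
  qed
qed

lemma perm_of_poly_funpow_pcompose:
  assumes "0 < N" "k \<in> {0..<N}"
  shows "perm_of_poly N ((pcompose p ^^ m) [:0, 1:]) k = (restrict_id (perm_of_poly N p) {0..<N} ^^ m) k"
proof (induct m)
  case 0
  then show ?case
    using assms(2) by (simp add: perm_of_poly_def)
next
  case (Suc m)
  let ?q = "(pcompose p ^^ m) [:0, 1:]"
  have "perm_of_poly N ((pcompose p ^^ Suc m) [:0, 1:]) k = poly p (poly ?q k mod N) mod N"
    using poly_mod_cong[of "poly ?q k" N "poly ?q k mod N" p] by (simp add: perm_of_poly_def poly_pcompose)
  also have "\<dots> = restrict_id (perm_of_poly N p) {0..<N} (perm_of_poly N ?q k)"
    using assms(1) by (simp add: perm_of_poly_def)
  finally show ?case
    by (simp add: Suc)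
qed

lemma inv_perm_of_poly_eq_perm_of_poly:
  assumes "0 < N" "perm_poly N p"
  obtains q where "perm_poly N q" "\<And>k. k \<in> {0..<N} \<Longrightarrow> inv_perm_of_poly N p k = perm_of_poly N q k"
proof -
  have bij: "bij_betw (perm_of_poly N p) {0..<N} {0..<N}"
    using assms(2) by (simp add: perm_poly_def perm_of_poly_def[abs_def])
  then obtain m where m: "\<And>k. k \<in> {0..<N} \<Longrightarrow> inv_perm_of_poly N p k = (restrict_id (perm_of_poly N p) {0..<N} ^^ m) k"
    using inv_into_eq_funpow_restrict_id[OF _ finite_atLeastLessThan_int] unfolding inv_perm_of_poly_def by blast
  define q where "q = (pcompose p ^^ m) [:0, 1:]"
  have inv: "inv_perm_of_poly N p k = perm_of_poly N q k" if "k \<in> {0..<N}" for k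
    using m[OF that] perm_of_poly_funpow_pcompose[OF assms(1) that] by (simp add: q_def)
  have "bij_betw (inv_perm_of_poly N p) {0..<N} {0..<N}"
    using bij by (simp add: inv_perm_of_poly_def bij_betw_inv_into)
  then have "bij_betw (perm_of_poly N q) {0..<N} {0..<N}"
    using bij_betw_cong[of "{0..<N}" "inv_perm_of_poly N p" "perm_of_poly N q"] inv by simp
  then have "perm_poly N q"
    by (simp add: perm_poly_def perm_of_poly_def[abs_def])
  with inv show ?thesis
    using that by blast
qed

lemma is_CAZAC_cong:
  assumes "0 < N" "\<And>k. k \<in> {0..<N} \<Longrightarrow> y k = z k"
  shows "is_CAZAC N y \<longleftrightarrow> is_CAZAC N z"
proof -
  have "autocorr N y d = autocorr N z d" for d
    unfolding autocorr_def using assms by (intro sum.cong) auto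
  then show ?thesis
    unfolding is_CAZAC_def using assms(2) by auto
qed

theorem theorem2:
  fixes n :: nat and N :: int and s :: "int \<Rightarrow> complex" and p :: "int poly"
  assumes "n \<ge> 2"
    and "N = 2 ^ n"
    and "is_zadoff_chu N s"
    and "perm_poly N p"
  shows "is_CAZAC N (s \<circ> perm_of_poly N p) \<and> is_CAZAC N (s \<circ> inv_perm_of_poly N p)"
proof
  show "is_CAZAC N (s \<circ> perm_of_poly N p)"
    using assms by (rule is_CAZAC_zadoff_chu_comp_perm_of_poly)
  have "0 < N"
    using assms(2) by simp
  then obtain q where "perm_poly N q" and inv: "\<And>k. k \<in> {0..<N} \<Longrightarrow> inv_perm_of_poly N p k = perm_of_poly N q k"
    using inv_perm_of_poly_eq_perm_of_poly assms(4) by blast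
  have "is_CAZAC N (s \<circ> perm_of_poly N q)"
    using assms(1-3) \<open>perm_poly N q\<close> by (rule is_CAZAC_zadoff_chu_comp_perm_of_poly)
  then show "is_CAZAC N (s \<circ> inv_perm_of_poly N p)"
    using is_CAZAC_cong[OF \<open>0 < N\<close>, of "s \<circ> inv_perm_of_poly N p" "s \<circ> perm_of_poly N q"] inv by simp
qed

end
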